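(* Fix $T>0$ and $d\in\{1,2,3\}$. There are constants $C_d>0$ depending only on $d$ and $C_l^{(d)},C_u^{(d)}>0$ depending only on $d$ and $T$ such that for all $0<t\le T$: $$\int_{\mathbb R^d}|K^{\mathrm{SFO}}_{t;x}|^2dx=C_dt^{-d/4},\qquad C_l^{(d)}t^{-d/4}\le\int_{\mathbb R^d}|K^{\mathrm{LKS}}_{t;x}|^2dx\le C_u^{(d)}t^{-d/4},$$ and hence $$\int_0^t\int_{\mathbb R^d}|K^{\mathrm{SFO}}_{s;x}|^2dx\,ds=C_dt^{\frac{4-d}{4}},\qquad C_l^{(d)}t^{\frac{4-d}{4}}\le\int_0^t\int_{\mathbb R^d}|K^{\mathrm{LKS}}_{s;x}|^2dx\,ds\le C_u^{(d)}t^{\frac{4-d}{4}}.$$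
   Context: $K^{\mathrm{LKS}}_{t;x}=(2\pi)^{-d}\int_{\mathbb R^d}e^{-\frac t8(-2+|\xi|^2)^2}\cos(\xi\cdot x)d\xi$ and $K^{\mathrm{SFO}}_{t;x}=(2\pi)^{-d}\int_{\mathbb R^d}e^{-\frac t8|\xi|^4}\cos(\xi\cdot x)d\xi$, $t>0$. *)

theory Defs
  imports "HOL-Analysis.Analysis"
begin

definition K_LKS :: "real \<Rightarrow> real ^ 'n \<Rightarrow> real" where
  "K_LKS t x = (2 * pi) powr (- real CARD('n)) *
     (LINT \<xi>|lborel. exp (- (t / 8) * (- 2 + (norm \<xi>)^2)^2) * cos (\<xi> \<bullet> x))"

definition K_SFO :: "real \<Rightarrow> real ^ 'n \<Rightarrow> real" where
  "K_SFO t x = (2 * pi) powr (- real CARD('n)) *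
     (LINT \<xi>|lborel. exp (- (t / 8) * (norm \<xi>)^4) * cos (\<xi> \<bullet> x))"

end

theory Submission
  imports Defs
begin

(* The substitution \<xi> = t powr (-1/4) *\<^sub>R \<eta> turns both kernels into t^(-d/4) times a profile
   P_s(y) = \<integral> exp (-(|\<eta>|^2 - s)^2 / 8) cos (\<eta> \<bullet> y) d\<eta>, evaluated at t^(-1/4) x, with s = 0 for
   SFO and s = 2 sqrt t for LKS. Hence \<integral> K_t^2 = c t^(-d/4) \<integral> P_s^2, which is the exact law for SFO;
   for LKS it remains to bound \<integral> P_s^2 above and below uniformly for s in [0, 2 sqrt T].
   From above: P_s is bounded, and a second difference along a shift h with h \<bullet> y = pi shows
   |P_s y| = O(|y|^-2), so P_s^2 is dominated by 1 / (1 + |y|^4), which is integrable as d \<le> 3.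
   From below: P_s 0 is bounded away from 0 and P_s is uniformly Lipschitz at 0.
   Integrating the power laws in time is possible because -d/4 > -1. *)

lemma nn_integral_lborel_scale:
  fixes f :: "'a::euclidean_space \<Rightarrow> ennreal"
  assumes [measurable]: "f \<in> borel_measurable borel" and "c > 0"
  shows "(\<integral>\<^sup>+x. f x \<partial>lborel) = ennreal (c ^ DIM('a)) * (\<integral>\<^sup>+x. f (c *\<^sub>R x) \<partial>lborel)"
  using \<open>c > 0\<close> by (subst lborel_affine[of c 0])
    (simp_all add: nn_integral_density nn_integral_distr nn_integral_cmult)

lemma integrable_lborel_scale:
  fixes f :: "'a::euclidean_space \<Rightarrow> real"
  assumes f: "integrable lborel f" and "c > 0"
  shows "integrable lborel (\<lambda>x. f (c *\<^sub>R x))"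
  using f f[THEN borel_measurable_integrable] \<open>c > 0\<close> unfolding integrable_iff_bounded
  by (subst (asm) nn_integral_lborel_scale[where c=c]) (auto simp: ennreal_mult_less_top)

lemma integral_lborel_scale:
  fixes f :: "'a::euclidean_space \<Rightarrow> real"
  assumes "c > 0"
  shows "(\<integral>x. f x \<partial>lborel) = c ^ DIM('a) * (\<integral>x. f (c *\<^sub>R x) \<partial>lborel)"
proof cases
  assume f: "integrable lborel f"
  then have [measurable]: "f \<in> borel_measurable borel" by auto
  show ?thesis
    using \<open>c > 0\<close> f integrable_lborel_scale[OF f \<open>c > 0\<close>]
    by (subst lborel_affine[of c 0]) (simp_all add: integral_density integral_distr)
next
  assume f: "\<not> integrable lborel f"
  have "\<not> integrable lborel (\<lambda>x. f (c *\<^sub>R x))"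
    using integrable_lborel_scale[of "\<lambda>x. f (c *\<^sub>R x)" "1/c"] f \<open>c > 0\<close> by auto
  with f show ?thesis by (simp add: not_integrable_integral_eq)
qed

lemma integrable_lborel_translate:
  fixes f :: "'a::euclidean_space \<Rightarrow> real"
  assumes f: "integrable lborel f"
  shows "integrable lborel (\<lambda>x. f (a + x))"
proof -
  have [measurable]: "f \<in> borel_measurable borel" using f by auto
  from f have "integrable (distr lborel borel ((+) a)) f" by (simp add: lborel_distr_plus)
  then show ?thesis by (subst (asm) integrable_distr_eq) auto
qed

lemma integral_lborel_translate:
  fixes f :: "'a::euclidean_space \<Rightarrow> real"
  assumes [measurable]: "f \<in> borel_measurable borel"
  shows "(\<integral>x. f x \<partial>lborel) = (\<integral>x. f (a + x) \<partial>lborel)"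
proof -
  have "(\<integral>x. f x \<partial>lborel) = (\<integral>x. f x \<partial>distr lborel borel ((+) a))"
    by (simp add: lborel_distr_plus)
  also have "\<dots> = (\<integral>x. f (a + x) \<partial>lborel)" by (subst integral_distr) auto
  finally show ?thesis .
qed

definition quartic_weight :: "'a::real_normed_vector \<Rightarrow> real" where
  "quartic_weight y = 1 / (1 + norm y ^ 4)"

lemma quartic_weight_pos: "quartic_weight y > 0"
  unfolding quartic_weight_def by (simp add: add_pos_nonneg)

lemma borel_measurable_quartic_weight [measurable]:
  "(quartic_weight :: 'a::euclidean_space \<Rightarrow> real) \<in> borel_measurable borel"
  unfolding quartic_weight_def by measurable

lemma le_quartic_weightI: "X * (1 + norm y ^ 4) \<le> C \<Longrightarrow> X \<le> C * quartic_weight y"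
  unfolding quartic_weight_def by (simp add: field_simps add_pos_nonneg)

lemma quartic_weight_le_dyadic: "\<exists>k. quartic_weight y \<le> (1/16) ^ k \<and> norm y < 2 ^ (k+1)"
proof -
  obtain n where "norm y < 2 ^ n" using real_arch_pow[of 2 "norm y"] by auto
  then have "norm y < 2 ^ (n+1)" by (rule less_le_trans) (rule power_increasing; simp)
  then obtain k where k: "norm y < 2 ^ (k+1)" and least: "\<And>j. j < k \<Longrightarrow> 2 ^ (j+1) \<le> norm y"
    using exists_least_iff[of "\<lambda>k. norm y < 2 ^ (k+1)"] by (auto simp: not_less)
  have "quartic_weight y \<le> (1/16) ^ k"
  proof (cases k)
    case 0
    then show ?thesis unfolding quartic_weight_def by (simp add: divide_le_eq add_pos_nonneg)
  next
    case (Suc j)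
    have "(16::real) ^ k = ((2::real) ^ 4) ^ k" by simp
    also have "\<dots> = (2 ^ k) ^ 4" by (metis power_mult mult.commute)
    also have "\<dots> \<le> norm y ^ 4" using least[of j] Suc by (intro power_mono) auto
    finally show ?thesis
      unfolding quartic_weight_def power_one_over
      by (intro divide_left_mono) (auto intro!: mult_pos_pos add_pos_nonneg)
  qed
  with k show ?thesis by blast
qed

lemma integrable_quartic_weight:
  assumes "DIM('a::euclidean_space) \<le> 3"
  shows "integrable lborel (quartic_weight :: 'a \<Rightarrow> real)"
proof (rule integrableI_nonneg)
  \<comment> \<open>On the ball of radius \<open>2^(k+1)\<close> outside radius \<open>2^k\<close> the weight is at most \<open>16^-k\<close>,
    and that ball has volume \<open>O(8^k)\<close> as the dimension is at most 3.\<close>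
  define V where "V = unit_ball_vol DIM('a)"
  have V: "V \<ge> 0" unfolding V_def by simp
  define shell where "shell k = ball (0::'a) (2 ^ (k+1))" for k :: nat
  have [measurable]: "shell k \<in> sets borel" for k unfolding shell_def by simp
  have "(\<integral>\<^sup>+x. quartic_weight (x::'a) \<partial>lborel) \<le> (\<integral>\<^sup>+x. (\<Sum>k. ennreal ((1/16) ^ k) * indicator (shell k) x) \<partial>lborel)"
  proof (rule nn_integral_mono)
    fix x :: 'a
    obtain k where k: "quartic_weight x \<le> (1/16) ^ k" "x \<in> shell k"
      using quartic_weight_le_dyadic[of x] unfolding shell_def by auto
    have "ennreal (quartic_weight x) \<le> ennreal ((1/16) ^ k) * indicator (shell k) x"
      using k by simp
    also have "\<dots> \<le> (\<Sum>k. ennreal ((1/16) ^ k) * indicator (shell k) x)"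
      using sum_le_suminf[OF summableI, of "{k}"] by simp
    finally show "ennreal (quartic_weight x) \<le> \<dots>" .
  qed
  also have "\<dots> = (\<Sum>k. ennreal ((1/16) ^ k) * emeasure lborel (shell k))"
  proof (subst nn_integral_suminf)
    show "(\<lambda>x. ennreal ((1/16) ^ k) * indicator (shell k) x) \<in> borel_measurable lborel" for k
      by measurable
  qed (simp add: nn_integral_cmult_indicator)
  also have "\<dots> \<le> (\<Sum>k. ennreal (8 * V * (1/2) ^ k))"
  proof (intro suminf_le summableI)
    fix k :: nat
    have "((2::real) ^ (k+1)) ^ DIM('a) \<le> ((2::real) ^ (k+1)) ^ 3"
      using assms one_le_power[of "2::real" "k+1"] by (intro power_increasing) auto
    also have "\<dots> = 8 * 8 ^ k" by (induct k) (auto simp: power_mult_distrib)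
    finally have "(1/16) ^ k * ((2 ^ (k+1)) ^ DIM('a) * V) \<le> (1/16) ^ k * (8 * 8 ^ k * V)"
      using V by (intro mult_left_mono mult_right_mono) auto
    also have "\<dots> = 8 * V * (1/2) ^ k"
      by (simp add: field_simps power_mult_distrib[symmetric])
    finally show "ennreal ((1/16) ^ k) * emeasure lborel (shell k) \<le> ennreal (8 * V * (1/2) ^ k)"
      using V by (simp add: shell_def emeasure_ball V_def mult.commute ennreal_mult[symmetric])
  qed
  also have "\<dots> = ennreal (\<Sum>k. 8 * V * (1/2) ^ k)"
    using V by (intro suminf_ennreal2 summable_mult summable_geometric) auto
  also have "\<dots> < \<infinity>" by simp
  finally show "(\<integral>\<^sup>+x. quartic_weight (x::'a) \<partial>lborel) < \<infinity>" .
qed (auto intro: less_imp_le quartic_weight_pos)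

lemma integral_quartic_weight_nonneg:
  "0 \<le> (LINT x|lborel. quartic_weight (x::'a::euclidean_space))"
  by (intro integral_nonneg_AE) (auto intro: less_imp_le quartic_weight_pos)

lemma integrable_quartic_weight_bound:
  fixes g :: "'a::euclidean_space \<Rightarrow> real"
  assumes "DIM('a) \<le> 3" and [measurable]: "g \<in> borel_measurable borel"
    and "\<And>y. \<bar>g y\<bar> \<le> C * quartic_weight y"
  shows "integrable lborel g"
proof (rule Bochner_Integration.integrable_bound[where f="\<lambda>y. C * quartic_weight y"])
  show "integrable lborel (\<lambda>y::'a. C * quartic_weight y)"
    using assms(1) integrable_quartic_weight by auto
  show "AE y in lborel. norm (g y) \<le> norm (C * quartic_weight y)"
    using assms(3) by (intro AE_I2) (smt (verit) real_norm_def)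
qed simp

lemma poly_times_gauss_le:
  fixes w :: real assumes w: "w \<ge> 0"
  shows "(1 + w) ^ 5 * exp (- (w^2 / 16)) \<le> 320 ^ 5"
proof -
  have "(1 + w) ^ 5 \<le> ((1 + w)^2) ^ 5" using w by (intro power_mono) (auto simp: power2_eq_square)
  also have "\<dots> \<le> (320 * (1 + w^2 / 160)) ^ 5"
    using zero_le_power2[of "w - 1"] w
    by (intro power_mono) (auto simp: power2_eq_square algebra_simps)
  also have "\<dots> = 320 ^ 5 * (1 + w^2 / 160) ^ 5" by (simp only: power_mult_distrib)
  also have "\<dots> \<le> 320 ^ 5 * (1 + w^2 / 160) ^ 10"
    by (intro mult_left_mono power_increasing) auto
  also have "\<dots> \<le> 320 ^ 5 * exp (w^2 / 160) ^ 10"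
    by (intro mult_left_mono power_mono) auto
  also have "exp (w^2 / 160) ^ 10 = exp (w^2 / 16)" by (simp flip: exp_of_nat_mult)
  finally show ?thesis by (simp add: exp_minus field_simps)
qed

lemma exp_shifted_square_le:
  fixes w s S :: real assumes "0 \<le> s" "s \<le> S"
  shows "exp (- ((w - s)^2 / 8)) \<le> exp (S^2 / 8) * exp (- (w^2 / 16))"
proof -
  have "2 * (w - s)^2 = (w - 2 * s)^2 + w^2 - 2 * s^2"
    by (simp add: power2_eq_square algebra_simps)
  moreover have "s^2 \<le> S^2" using assms by (intro power_mono) auto
  ultimately have "- ((w - s)^2 / 8) \<le> S^2 / 8 + - (w^2 / 16)"
    using zero_le_power2[of "w - 2 * s"] by linarith
  then show ?thesis by (simp flip: exp_add)
qed

definition ring_gauss :: "real \<Rightarrow> 'a::real_normed_vector \<Rightarrow> real" where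
  "ring_gauss s \<eta> = exp (- ((norm \<eta> ^ 2 - s)^2 / 8))"

lemma ring_gauss_pos: "ring_gauss s \<eta> > 0"
  unfolding ring_gauss_def by simp

lemma abs_ring_gauss [simp]: "\<bar>ring_gauss s \<eta>\<bar> = ring_gauss s \<eta>"
  using ring_gauss_pos[of s \<eta>] by simp

lemma borel_measurable_ring_gauss [measurable]:
  "(ring_gauss s :: 'a::euclidean_space \<Rightarrow> real) \<in> borel_measurable borel"
  unfolding ring_gauss_def by measurable

lemma ring_gauss_le_quartic_weight:
  assumes "0 \<le> s" "s \<le> S"
  shows "(1 + norm \<eta>) * ring_gauss s \<eta> \<le> 2 * exp (S^2 / 8) * 320 ^ 5 * quartic_weight \<eta>"
proof (rule le_quartic_weightI)
  define w where "w = norm \<eta> ^ 2"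
  have w: "w \<ge> 0" unfolding w_def by simp
  have "0 \<le> (norm \<eta> - 1/2)^2" by simp
  then have "norm \<eta> \<le> w + 1/4" unfolding w_def power2_diff by (simp add: power_divide)
  then have "1 + norm \<eta> \<le> 2 * (1 + w)" using w by (simp add: algebra_simps)
  moreover have "norm \<eta> ^ 4 = w^2" unfolding w_def by (simp flip: power_mult)
  then have "1 + norm \<eta> ^ 4 \<le> (1 + w)^2" using w by (simp add: power2_eq_square algebra_simps)
  ultimately have "(1 + norm \<eta>) * (1 + norm \<eta> ^ 4) \<le> (2 * (1 + w)) * (1 + w)^2"
    using w by (intro mult_mono) auto
  also have "\<dots> = 2 * (1 + w)^3" by (simp add: power3_eq_cube power2_eq_square)
  also have "\<dots> \<le> 2 * (1 + w)^5" using w by (intro mult_left_mono power_increasing) auto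
  finally have poly: "(1 + norm \<eta>) * (1 + norm \<eta> ^ 4) \<le> 2 * (1 + w)^5" .
  have gauss: "ring_gauss s \<eta> \<le> exp (S^2 / 8) * exp (- (w^2 / 16))"
    unfolding ring_gauss_def w_def[symmetric] by (rule exp_shifted_square_le[OF assms])
  have "(1 + norm \<eta>) * ring_gauss s \<eta> * (1 + norm \<eta> ^ 4)
      = ((1 + norm \<eta>) * (1 + norm \<eta> ^ 4)) * ring_gauss s \<eta>" by (simp only: ac_simps)
  also have "\<dots> \<le> 2 * (1 + w)^5 * (exp (S^2 / 8) * exp (- (w^2 / 16)))"
    using w by (intro mult_mono[OF poly gauss]) (auto intro: less_imp_le ring_gauss_pos)
  also have "\<dots> = 2 * exp (S^2 / 8) * ((1 + w)^5 * exp (- (w^2 / 16)))" by simp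
  also have "\<dots> \<le> 2 * exp (S^2 / 8) * 320 ^ 5" using poly_times_gauss_le[OF w] by simp
  finally show "(1 + norm \<eta>) * ring_gauss s \<eta> * (1 + norm \<eta> ^ 4) \<le> 2 * exp (S^2 / 8) * 320 ^ 5" .
qed

lemma
  assumes "0 \<le> s" "s \<le> S"
  shows ring_gauss_le: "ring_gauss s \<eta> \<le> 2 * exp (S^2 / 8) * 320 ^ 5 * quartic_weight \<eta>"
    and ring_gauss_norm_le: "ring_gauss s \<eta> * norm \<eta> \<le> 2 * exp (S^2 / 8) * 320 ^ 5 * quartic_weight \<eta>"
proof -
  have "0 \<le> ring_gauss s \<eta> * norm \<eta>" "0 \<le> ring_gauss s \<eta>"
    using ring_gauss_pos[of s \<eta>] by simp_all
  moreover have "(1 + norm \<eta>) * ring_gauss s \<eta> = ring_gauss s \<eta> + ring_gauss s \<eta> * norm \<eta>"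
    by (simp add: algebra_simps)
  ultimately show "ring_gauss s \<eta> \<le> 2 * exp (S^2 / 8) * 320 ^ 5 * quartic_weight \<eta>"
    and "ring_gauss s \<eta> * norm \<eta> \<le> 2 * exp (S^2 / 8) * 320 ^ 5 * quartic_weight \<eta>"
    using ring_gauss_le_quartic_weight[OF assms, of \<eta>] by linarith+
qed

lemma
  fixes y :: "'a::euclidean_space"
  assumes "DIM('a) \<le> 3" "0 \<le> s"
  shows integrable_ring_gauss: "integrable lborel (ring_gauss s :: 'a \<Rightarrow> real)"
    and integrable_ring_gauss_norm: "integrable lborel (\<lambda>\<eta>::'a. ring_gauss s \<eta> * norm \<eta>)"
    and integrable_ring_gauss_cos: "integrable lborel (\<lambda>\<eta>. ring_gauss s \<eta> * cos (\<eta> \<bullet> y))"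
proof -
  define K where "K = 2 * exp (s^2 / 8) * 320 ^ 5"
  note bounds = ring_gauss_le[OF assms(2) order_refl] ring_gauss_norm_le[OF assms(2) order_refl]
  show "integrable lborel (ring_gauss s :: 'a \<Rightarrow> real)"
    using bounds by (intro integrable_quartic_weight_bound[OF assms(1), where C=K]) (auto simp: K_def)
  show "integrable lborel (\<lambda>\<eta>::'a. ring_gauss s \<eta> * norm \<eta>)"
    using bounds by (intro integrable_quartic_weight_bound[OF assms(1), where C=K]) (auto simp: K_def abs_mult)
  show "integrable lborel (\<lambda>\<eta>. ring_gauss s \<eta> * cos (\<eta> \<bullet> y))"
  proof (intro integrable_quartic_weight_bound[OF assms(1), where C=K])
    fix \<eta> :: 'a
    have "ring_gauss s \<eta> * \<bar>cos (\<eta> \<bullet> y)\<bar> \<le> ring_gauss s \<eta>"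
      by (intro mult_left_le) (auto intro: less_imp_le ring_gauss_pos)
    then show "\<bar>ring_gauss s \<eta> * cos (\<eta> \<bullet> y)\<bar> \<le> K * quartic_weight \<eta>"
      using bounds(1)[of \<eta>] by (simp add: K_def abs_mult)
  qed simp
qed

lemma second_derivative_poly_le:
  fixes w s S :: real assumes "0 \<le> w" "0 \<le> s" "s \<le> S"
  shows "(w - s)^2 * w / 4 + w + \<bar>w - s\<bar> / 2 \<le> 2 * (1 + S)^2 * (1 + w)^3"
proof -
  have abs_le: "\<bar>w - s\<bar> \<le> (1 + S) * (1 + w)"
  proof -
    have "S * w \<ge> 0" "\<bar>w - s\<bar> \<le> w + S" using assms by (auto simp: abs_if)
    moreover have "(1 + S) * (1 + w) = 1 + S + w + S * w" by (simp add: algebra_simps)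
    ultimately show ?thesis by linarith
  qed
  then have sq_le: "(w - s)^2 \<le> ((1 + S) * (1 + w))^2" by (metis abs_ge_zero power2_abs power_mono)
  have ge1: "1 \<le> 1 + S" "1 \<le> 1 + w" using assms by auto
  have S_le: "1 + S \<le> (1 + S)^2" using ge1 by (simp add: power2_eq_square)
  have w_le: "1 + w \<le> (1 + w)^3" "(1 + w)^2 \<le> (1 + w)^3"
    using power_increasing[of 1 3 "1 + w"] power_increasing[of 2 3 "1 + w"] ge1 by auto
  have "(w - s)^2 * w / 4 \<le> ((1 + S) * (1 + w))^2 * (1 + w) / 4"
    using sq_le assms by (intro divide_right_mono mult_mono) auto
  also have "\<dots> = (1 + S)^2 * (1 + w)^3 / 4"
    by (simp add: power_mult_distrib power3_eq_cube power2_eq_square)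
  finally have term1: "(w - s)^2 * w / 4 \<le> (1 + S)^2 * (1 + w)^3 / 4" .
  have "w \<le> 1 * (1 + w)^3" using w_le by simp
  also have "\<dots> \<le> (1 + S)^2 * (1 + w)^3" using ge1 S_le by (intro mult_right_mono) auto
  finally have term2: "w \<le> (1 + S)^2 * (1 + w)^3" .
  have "(1 + S) * (1 + w) \<le> (1 + S)^2 * (1 + w)^3" using S_le w_le ge1 by (intro mult_mono) auto
  then have term3: "\<bar>w - s\<bar> / 2 \<le> (1 + S)^2 * (1 + w)^3 / 2" using abs_le by simp
  have "0 \<le> (1 + S)^2 * (1 + w)^3" using ge1 by simp
  with term1 term2 term3 show ?thesis by linarith
qed

lemma one_plus_succ_pow4_le:
  fixes r :: real assumes "r \<ge> 0"
  shows "1 + (r+1)^4 \<le> 9*(1+r^2)^2"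
proof -
  have "(r-1)^2*(7*r^2+10*r+7) \<ge> 0" using assms by (intro mult_nonneg_nonneg) auto
  moreover have "(r-1)^2*(7*r^2+10*r+7) = 7*r^4 - 4*r^3 - 6*r^2 - 4*r + 7"
    "1 + (r+1)^4 = 2 + 4*r + 6*r^2 + 4*r^3 + r^4" "9*(1+r^2)^2 = 9+18*r^2+9*r^4"
    by (simp_all add: power2_eq_square power3_eq_cube power4_eq_xxxx algebra_simps)
  moreover have "r^4 \<ge> 0" "r^2 \<ge> 0" by simp_all
  ultimately show ?thesis by linarith
qed



lemma second_difference_le:
  fixes \<phi> \<phi>' \<phi>'' :: "real \<Rightarrow> real"
  assumes d1: "\<And>\<sigma>. (\<phi> has_real_derivative \<phi>' \<sigma>) (at \<sigma>)"
    and d2: "\<And>\<sigma>. (\<phi>' has_real_derivative \<phi>'' \<sigma>) (at \<sigma>)"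
    and b: "\<And>\<sigma>. 0 \<le> \<sigma> \<Longrightarrow> \<sigma> \<le> 2 \<Longrightarrow> \<bar>\<phi>'' \<sigma>\<bar> \<le> B"
  shows "\<bar>\<phi> 0 - 2 * \<phi> 1 + \<phi> 2\<bar> \<le> 2 * B"
proof -
  obtain a where a: "0 < a" "a < 1" "\<phi> 1 - \<phi> 0 = (1 - 0) * \<phi>' a"
    using MVT2[of 0 1 \<phi> \<phi>'] d1 by auto
  obtain b where b': "1 < b" "b < 2" "\<phi> 2 - \<phi> 1 = (2 - 1) * \<phi>' b"
    using MVT2[of 1 2 \<phi> \<phi>'] d1 by auto
  obtain c where c: "a < c" "c < b" "\<phi>' b - \<phi>' a = (b - a) * \<phi>'' c"
    using MVT2[of a b \<phi>' \<phi>''] d2 a b' by auto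
  have "\<phi> 0 - 2 * \<phi> 1 + \<phi> 2 = (b - a) * \<phi>'' c" using a b' c by simp
  then have "\<bar>\<phi> 0 - 2 * \<phi> 1 + \<phi> 2\<bar> = \<bar>b - a\<bar> * \<bar>\<phi>'' c\<bar>" by (simp add: abs_mult)
  also have "\<dots> \<le> 2 * B" using b[of c] a b' c by (intro mult_mono) auto
  finally show ?thesis .
qed

lemma gauss_quadratic_derivatives:
  fixes A B C s :: real
  defines "v \<equiv> \<lambda>\<sigma>. A - 2*B*\<sigma> + C*\<sigma>^2 - s"
  defines "W' \<equiv> \<lambda>\<sigma>. - 2*B + 2*C*\<sigma>"
  defines "\<phi> \<equiv> \<lambda>\<sigma>. exp (-((v \<sigma>)^2/8))"
  shows "(\<phi> has_real_derivative (-(v \<sigma> * W' \<sigma> / 4) * \<phi> \<sigma>)) (at \<sigma>)"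
    "((\<lambda>\<sigma>. -(v \<sigma> * W' \<sigma> / 4) * \<phi> \<sigma>) has_real_derivative
        (((v \<sigma> * W' \<sigma>)^2/16 - ((W' \<sigma>)^2 + 2 * C * v \<sigma>)/4) * \<phi> \<sigma>)) (at \<sigma>)"
proof -
  show "(\<phi> has_real_derivative (-(v \<sigma> * W' \<sigma> / 4) * \<phi> \<sigma>)) (at \<sigma>)" for \<sigma>
    unfolding \<phi>_def v_def W'_def
    by (intro derivative_eq_intros) (rule refl | simp add: power2_eq_square field_simps)+
  show "((\<lambda>\<sigma>. -(v \<sigma> * W' \<sigma> / 4) * \<phi> \<sigma>) has_real_derivative
        (((v \<sigma> * W' \<sigma>)^2/16 - ((W' \<sigma>)^2 + 2 * C * v \<sigma>)/4) * \<phi> \<sigma>)) (at \<sigma>)"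
    unfolding v_def W'_def \<phi>_def
    by (intro derivative_eq_intros) (rule refl | simp add: power2_eq_square field_simps)+
qed

definition second_derivative_const :: "real \<Rightarrow> real" where
  "second_derivative_const S = exp (S^2/8) * 2 * (1+S)^2 * (9 * 320^5)"

lemma second_derivative_const_nonneg: "second_derivative_const S \<ge> 0"
  unfolding second_derivative_const_def by simp

lemma gauss_cube_le_quartic_weight:
  fixes z \<eta> :: "'a::real_normed_vector"
  assumes "norm \<eta> \<le> norm z + 1"
  shows "(1 + (norm z)^2)^3 * exp (- (((norm z)^2)^2/16)) \<le> (9 * 320^5) * quartic_weight \<eta>"
proof (rule le_quartic_weightI)
  define W where "W = (norm z)^2"
  have W: "W \<ge> 0" unfolding W_def by simp
  have "1 + norm \<eta> ^ 4 \<le> 1 + (norm z + 1)^4" using assms by (simp add: power_mono)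
  also have "\<dots> \<le> 9 * (1 + W)^2" unfolding W_def by (rule one_plus_succ_pow4_le) simp
  finally have poly: "1 + norm \<eta> ^ 4 \<le> 9 * (1 + W)^2" .
  have "(1 + W)^3 * exp (-(W^2/16)) * (1 + norm \<eta> ^ 4) \<le> (1 + W)^3 * exp (-(W^2/16)) * (9 * (1 + W)^2)"
    using poly W by (intro mult_left_mono) auto
  also have "\<dots> = 9 * ((1+W)^5 * exp (-(W^2/16)))" by (simp add: power_add[symmetric])
  also have "\<dots> \<le> 9 * 320^5" using poly_times_gauss_le[OF W] by simp
  finally show "(1 + (norm z)^2)^3 * exp (- (((norm z)^2)^2/16)) * (1 + norm \<eta> ^ 4) \<le> 9 * 320^5"
    unfolding W_def by simp
qed

lemma second_derivative_factor_le:
  fixes W W' C s S :: real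
  assumes W: "0 \<le> W" and C: "0 \<le> C" and CS: "W'^2 \<le> 4 * W * C" and s: "0 \<le> s" "s \<le> S"
  shows "\<bar>((W - s) * W')^2/16 - (W'^2 + 2 * C * (W - s))/4\<bar> \<le> C * (2*(1+S)^2*(1+W)^3)"
proof -
  define v where "v = W - s"
  have "\<bar>(v * W')^2/16 - (W'^2 + 2 * C * v)/4\<bar> \<le> \<bar>(v * W')^2/16\<bar> + \<bar>(W'^2 + 2 * C * v)/4\<bar>"
    by (rule abs_triangle_ineq4)
  also have "\<dots> \<le> v^2 * W'^2/16 + (W'^2 + 2 * C * \<bar>v\<bar>)/4"
    using abs_triangle_ineq[of "W'^2" "2 * C * v"] C by (simp add: power_mult_distrib abs_mult)
  also have "\<dots> \<le> v^2 * (4 * W * C)/16 + (4 * W * C + 2 * C * \<bar>v\<bar>)/4"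
    using CS C by (intro add_mono divide_right_mono mult_left_mono) auto
  also have "\<dots> = C * (v^2 * W/4 + W + \<bar>v\<bar>/2)" by (simp add: algebra_simps)
  also have "\<dots> \<le> C * (2*(1+S)^2*(1+W)^3)"
    using second_derivative_poly_le[OF W s] C unfolding v_def by (intro mult_left_mono) (auto simp: mult.commute)
  finally show ?thesis unfolding v_def .
qed

lemma gauss_quadratic_second_derivative_le:
  fixes \<eta> h :: "'a::real_inner" and \<sigma> :: real
  assumes s: "0 \<le> s" "s \<le> S" and hs: "norm (\<sigma> *\<^sub>R h) \<le> 1"
  defines "A \<equiv> \<eta> \<bullet> \<eta>" and "B \<equiv> \<eta> \<bullet> h" and "C \<equiv> h \<bullet> h"
  defines "v \<equiv> A - 2*B*\<sigma> + C*\<sigma>^2 - s" and "W' \<equiv> - 2*B + 2*C*\<sigma>"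
  shows "\<bar>((v * W')^2/16 - (W'^2 + 2 * C * v)/4) * exp (-(v^2/8))\<bar> \<le> C * second_derivative_const S * quartic_weight \<eta>"
proof -
  define z where "z = \<eta> - \<sigma> *\<^sub>R h"
  define W where "W = (norm z)^2"
  have W0: "W \<ge> 0" "C \<ge> 0" unfolding W_def C_def by simp_all
  have "W = z \<bullet> z" unfolding W_def by (simp add: power2_norm_eq_inner)
  then have Wv: "v = W - s" unfolding v_def z_def A_def B_def C_def
    by (simp add: inner_commute power2_eq_square algebra_simps)
  have W'z: "W' = -2 * (z \<bullet> h)" unfolding W'_def z_def B_def C_def
    by (simp add: algebra_simps)
  have CS: "W'^2 \<le> 4 * W * C"
  proof -
    have "\<bar>z \<bullet> h\<bar> \<le> norm z * norm h" by (rule Cauchy_Schwarz_ineq2)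
    then have "(z \<bullet> h)^2 \<le> (norm z * norm h)^2"
      by (metis abs_ge_zero power2_abs power_mono)
    then show ?thesis unfolding W'z W_def C_def by (simp add: power_mult_distrib power2_norm_eq_inner)
  qed
  define E where "E = exp (-(v^2/8))"
  have E0: "E > 0" unfolding E_def by simp
  have factor: "\<bar>(v * W')^2/16 - (W'^2 + 2 * C * v)/4\<bar> \<le> C * (2*(1+S)^2*(1+W)^3)"
    unfolding Wv by (rule second_derivative_factor_le[OF W0 CS s])
  have gauss: "E \<le> exp (S^2/8) * exp (-(W^2/16))" unfolding E_def Wv by (rule exp_shifted_square_le[OF s])
  have nz: "norm \<eta> \<le> norm z + 1"
    using norm_triangle_ineq[of z "\<sigma> *\<^sub>R h"] hs unfolding z_def by simp
  have weight: "(1 + W)^3 * exp (-(W^2/16)) \<le> (9 * 320^5) * quartic_weight \<eta>"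
    using gauss_cube_le_quartic_weight[OF nz] unfolding W_def by simp
  have "\<bar>((v * W')^2/16 - (W'^2 + 2 * C * v)/4) * E\<bar> = \<bar>(v * W')^2/16 - (W'^2 + 2 * C * v)/4\<bar> * E"
    using E0 by (simp add: abs_mult)
  also have "\<dots> \<le> (C * (2*(1+S)^2*(1+W)^3)) * (exp (S^2/8) * exp (-(W^2/16)))"
    using factor gauss E0 W0 by (intro mult_mono) auto
  also have "\<dots> = C * exp (S^2/8) * 2 * (1+S)^2 * ((1+W)^3 * exp (-(W^2/16)))" by simp
  also have "\<dots> \<le> C * exp (S^2/8) * 2 * (1+S)^2 * ((9 * 320^5) * quartic_weight \<eta>)"
    using weight W0 by (intro mult_left_mono) auto
  also have "\<dots> = C * second_derivative_const S * quartic_weight \<eta>" unfolding second_derivative_const_def by simp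
  finally show ?thesis unfolding E_def .
qed

lemma ring_gauss_second_difference_le:
  fixes \<eta> h :: "'a::real_inner"
  assumes s: "0 \<le> s" "s \<le> S" and hh: "norm h \<le> 1/2"
  shows "\<bar>ring_gauss s \<eta> - 2 * ring_gauss s (\<eta> - h) + ring_gauss s (\<eta> - 2 *\<^sub>R h)\<bar> \<le> 2 * ((h \<bullet> h) * second_derivative_const S * quartic_weight \<eta>)"
proof -
  define A where "A = \<eta> \<bullet> \<eta>"
  define B where "B = \<eta> \<bullet> h"
  define C where "C = h \<bullet> h"
  define v where "v = (\<lambda>\<sigma>::real. A - 2*B*\<sigma> + C*\<sigma>^2 - s)"
  define W' where "W' = (\<lambda>\<sigma>::real. - 2*B + 2*C*\<sigma>)"
  define \<phi> where "\<phi> = (\<lambda>\<sigma>. exp (-((v \<sigma>)^2/8)))"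
  have on_line: "ring_gauss s (\<eta> - \<sigma> *\<^sub>R h) = \<phi> \<sigma>" for \<sigma>
  proof -
    have "(norm (\<eta> - \<sigma> *\<^sub>R h))^2 = (\<eta> - \<sigma> *\<^sub>R h) \<bullet> (\<eta> - \<sigma> *\<^sub>R h)"
      by (simp add: power2_norm_eq_inner)
    also have "\<dots> = A - 2*B*\<sigma> + C*\<sigma>^2" unfolding A_def B_def C_def
      by (simp add: inner_commute power2_eq_square algebra_simps)
    finally show ?thesis unfolding ring_gauss_def \<phi>_def v_def by simp
  qed
  have "\<bar>\<phi> 0 - 2 * \<phi> 1 + \<phi> 2\<bar> \<le> 2 * (C * second_derivative_const S * quartic_weight \<eta>)"
  proof (rule second_difference_le)
    show "(\<phi> has_real_derivative (-(v \<sigma> * W' \<sigma> / 4) * \<phi> \<sigma>)) (at \<sigma>)" for \<sigma>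
      unfolding \<phi>_def v_def W'_def by (rule gauss_quadratic_derivatives(1))
    show "((\<lambda>\<sigma>. -(v \<sigma> * W' \<sigma> / 4) * \<phi> \<sigma>) has_real_derivative
        (((v \<sigma> * W' \<sigma>)^2/16 - ((W' \<sigma>)^2 + 2 * C * v \<sigma>)/4) * \<phi> \<sigma>)) (at \<sigma>)" for \<sigma>
      unfolding \<phi>_def v_def W'_def by (rule gauss_quadratic_derivatives(2))
    fix \<sigma> :: real assume "0 \<le> \<sigma>" "\<sigma> \<le> 2"
    then have "norm (\<sigma> *\<^sub>R h) \<le> 1" using hh by (simp add: mult_mono[of \<sigma> 2 "norm h" "1/2", simplified])
    then show "\<bar>((v \<sigma> * W' \<sigma>)^2/16 - ((W' \<sigma>)^2 + 2 * C * v \<sigma>)/4) * \<phi> \<sigma>\<bar> \<le> C * second_derivative_const S * quartic_weight \<eta>"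
      unfolding \<phi>_def v_def W'_def A_def B_def C_def by (rule gauss_quadratic_second_derivative_le[OF s])
  qed
  moreover have "\<phi> 0 = ring_gauss s \<eta>" "\<phi> 1 = ring_gauss s (\<eta> - h)" "\<phi> 2 = ring_gauss s (\<eta> - 2 *\<^sub>R h)"
    using on_line[of 0] on_line[of 1] on_line[of 2] by simp_all
  ultimately show ?thesis unfolding C_def by simp
qed

definition ring_kernel :: "real \<Rightarrow> 'a::euclidean_space \<Rightarrow> real" where
  "ring_kernel s y = (LINT \<eta>|lborel. ring_gauss s \<eta> * cos (\<eta> \<bullet> y))"

lemma borel_measurable_ring_kernel [measurable]:
  "(ring_kernel s :: 'a::euclidean_space \<Rightarrow> real) \<in> borel_measurable borel"
  unfolding ring_kernel_def by measurable

lemma ring_kernel_decay: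
  fixes y :: "'a::euclidean_space"
  assumes d: "DIM('a) \<le> 3" and s: "0 \<le> s" "s \<le> S" and y: "norm y \<ge> 2 * pi"
  shows "\<bar>ring_kernel s y\<bar> \<le> pi^2 * second_derivative_const S * (LINT x|lborel. quartic_weight (x::'a)) / (2 * norm y ^ 2)"
proof -
  have y0: "norm y > 0" using y pi_gt_zero by linarith
  define h where "h = (pi / norm y ^ 2) *\<^sub>R y"
  have hy: "h \<bullet> y = pi" and hh: "h \<bullet> h = pi^2 / norm y ^ 2" and nh: "norm h = pi / norm y"
    unfolding h_def using y0 by (simp_all add: power2_norm_eq_inner[symmetric] power2_eq_square)
  have nh2: "norm h \<le> 1/2" unfolding nh using y y0 by (simp add: field_simps)
  define g where "g \<eta> = ring_gauss s \<eta> * cos (\<eta> \<bullet> y)" for \<eta> :: 'a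
  define g1 where "g1 \<eta> = ring_gauss s (\<eta> - h) * cos (\<eta> \<bullet> y)" for \<eta> :: 'a
  define g2 where "g2 \<eta> = ring_gauss s (\<eta> - 2 *\<^sub>R h) * cos (\<eta> \<bullet> y)" for \<eta> :: 'a
  have g: "integrable lborel g" unfolding g_def by (rule integrable_ring_gauss_cos[OF d s(1)])
  have [measurable]: "g1 \<in> borel_measurable borel" "g2 \<in> borel_measurable borel"
    unfolding g1_def g2_def by measurable
  \<comment> \<open>Shifting by \<open>h\<close> flips the sign of the oscillating factor, since \<open>h \<bullet> y = pi\<close>.\<close>
  have g1_shift: "g1 (h + \<eta>) = - g \<eta>" and g2_shift: "g2 (2 *\<^sub>R h + \<eta>) = g \<eta>" for \<eta>
    unfolding g_def g1_def g2_def by (simp_all add: inner_add_left hy add.commute)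
  have g1: "integrable lborel g1"
    using integrable_lborel_translate[of "\<lambda>\<eta>. g1 (h + \<eta>)" "- h"] g by (simp add: g1_shift)
  have g2: "integrable lborel g2"
    using integrable_lborel_translate[of "\<lambda>\<eta>. g2 (2 *\<^sub>R h + \<eta>)" "- 2 *\<^sub>R h"] g by (simp add: g2_shift)
  have "(LINT \<eta>|lborel. g \<eta> - 2 * g1 \<eta> + g2 \<eta>) = 4 * ring_kernel s y"
    using g g1 g2 integral_lborel_translate[of g1 h] integral_lborel_translate[of g2 "2 *\<^sub>R h"]
    by (simp add: g1_shift g2_shift ring_kernel_def g_def[symmetric])
  moreover have "\<bar>g \<eta> - 2 * g1 \<eta> + g2 \<eta>\<bar> \<le> 2 * ((h \<bullet> h) * second_derivative_const S * quartic_weight \<eta>)" for \<eta>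
  proof -
    have "\<bar>g \<eta> - 2 * g1 \<eta> + g2 \<eta>\<bar>
        = \<bar>ring_gauss s \<eta> - 2 * ring_gauss s (\<eta> - h) + ring_gauss s (\<eta> - 2 *\<^sub>R h)\<bar> * \<bar>cos (\<eta> \<bullet> y)\<bar>"
      unfolding g_def g1_def g2_def abs_mult[symmetric] by (simp add: algebra_simps)
    also have "\<dots> \<le> 2 * ((h \<bullet> h) * second_derivative_const S * quartic_weight \<eta>) * 1"
      using second_derivative_const_nonneg quartic_weight_pos[of \<eta>]
      by (intro mult_mono ring_gauss_second_difference_le[OF s nh2]) auto
    finally show ?thesis by simp
  qed
  then have "\<bar>LINT \<eta>|lborel. g \<eta> - 2 * g1 \<eta> + g2 \<eta>\<bar>
      \<le> (LINT \<eta>|lborel. 2 * ((h \<bullet> h) * second_derivative_const S * quartic_weight (\<eta>::'a)))"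
    using g g1 g2 integrable_quartic_weight[OF d]
    by (intro integral_abs_bound_integral) auto
  ultimately have "4 * \<bar>ring_kernel s y\<bar>
      \<le> 2 * (pi^2 / norm y ^ 2) * second_derivative_const S * (LINT x|lborel. quartic_weight (x::'a))"
    by (simp add: hh abs_mult mult.assoc)
  then show ?thesis using y0 by (simp add: field_simps)
qed

lemma ring_kernel_0: "ring_kernel s (0::'a::euclidean_space) = (LINT \<eta>|lborel. ring_gauss s (\<eta>::'a))"
  unfolding ring_kernel_def by simp

lemma abs_ring_kernel_le_ring_kernel_0:
  fixes y :: "'a::euclidean_space"
  assumes "DIM('a) \<le> 3" "0 \<le> s"
  shows "\<bar>ring_kernel s y\<bar> \<le> ring_kernel s (0::'a)"
  unfolding ring_kernel_0 ring_kernel_def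
  using integrable_ring_gauss[OF assms] integrable_ring_gauss_cos[OF assms]
  by (intro integral_abs_bound_integral) (auto simp: abs_mult intro!: mult_left_le less_imp_le[OF ring_gauss_pos])

lemma ring_kernel_0_le:
  assumes "DIM('a::euclidean_space) \<le> 3" "0 \<le> s" "s \<le> S"
  shows "ring_kernel s (0::'a) \<le> 2 * exp (S^2/8) * 320^5 * (LINT x|lborel. quartic_weight (x::'a))"
proof -
  have "ring_kernel s (0::'a) \<le> (LINT \<eta>|lborel. 2 * exp (S^2/8) * 320^5 * quartic_weight (\<eta>::'a))"
    unfolding ring_kernel_0
    using integrable_ring_gauss[OF assms(1,2)] integrable_quartic_weight[OF assms(1)]
    by (intro integral_mono ring_gauss_le[OF assms(2,3)]) auto
  then show ?thesis by simp
qed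

lemma ring_kernel_0_ge:
  assumes "DIM('a::euclidean_space) \<le> 3" "0 \<le> s" "s \<le> S"
  shows "exp (- ((1 + S)^2 / 8)) * unit_ball_vol DIM('a) \<le> ring_kernel s (0::'a)"
proof -
  have "(LINT \<eta>|lborel. exp (- ((1 + S)^2 / 8)) * indicator (ball (0::'a) 1) \<eta>) \<le> ring_kernel s (0::'a)"
    unfolding ring_kernel_0
  proof (rule integral_mono)
    fix \<eta> :: 'a
    show "exp (- ((1 + S)^2 / 8)) * indicator (ball 0 1) \<eta> \<le> ring_gauss s \<eta>"
    proof (cases "\<eta> \<in> ball 0 1")
      case True
      then have "norm \<eta> ^ 2 \<le> 1" by (simp add: power_le_one)
      moreover have "0 \<le> norm \<eta> ^ 2" by simp
      ultimately have "\<bar>norm \<eta> ^ 2 - s\<bar> \<le> 1 + S" using assms unfolding abs_le_iff by (intro conjI; linarith)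
      then have "(norm \<eta> ^ 2 - s)^2 \<le> (1 + S)^2" by (metis abs_ge_zero power2_abs power_mono)
      then show ?thesis using True unfolding ring_gauss_def by simp
    qed (auto intro: less_imp_le ring_gauss_pos)
  qed (use integrable_ring_gauss[OF assms(1,2)] emeasure_lborel_ball_finite[of "0::'a" 1] in auto)
  then show ?thesis by (simp add: content_ball)
qed

lemma abs_cos_sub_one_le: "\<bar>cos x - 1\<bar> \<le> \<bar>x::real\<bar>"
proof -
  have "\<bar>cos x - 1\<bar> = 2 * (\<bar>sin (x/2)\<bar> * \<bar>sin (x/2)\<bar>)"
    using cos_double_sin[of "x/2"] by (simp add: power2_eq_square)
  also have "\<dots> \<le> 2 * (\<bar>sin (x/2)\<bar> * 1)" by (intro mult_left_mono) auto
  also have "\<dots> \<le> \<bar>x\<bar>" using abs_sin_x_le_abs_x[of "x/2"] by simp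
  finally show ?thesis .
qed

lemma ring_kernel_lipschitz_at_0:
  fixes y :: "'a::euclidean_space"
  assumes d: "DIM('a) \<le> 3" and s: "0 \<le> s" "s \<le> S"
  shows "\<bar>ring_kernel s y - ring_kernel s (0::'a)\<bar>
    \<le> norm y * (2 * exp (S^2/8) * 320^5 * (LINT x|lborel. quartic_weight (x::'a)))"
proof -
  have int_cos: "integrable lborel (\<lambda>\<eta>::'a. ring_gauss s \<eta> * (cos (\<eta> \<bullet> y) - 1))"
    using integrable_ring_gauss_cos[OF d s(1), of y] integrable_ring_gauss[OF d s(1)]
    by (simp add: algebra_simps)
  have "ring_kernel s y - ring_kernel s (0::'a) = (LINT \<eta>|lborel. ring_gauss s \<eta> * (cos (\<eta> \<bullet> y) - 1))"
    unfolding ring_kernel_0 ring_kernel_def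
    using integrable_ring_gauss_cos[OF d s(1), of y] integrable_ring_gauss[OF d s(1)]
    by (simp add: algebra_simps)
  also have "\<bar>\<dots>\<bar> \<le> (LINT \<eta>|lborel. norm y * (ring_gauss s \<eta> * norm (\<eta>::'a)))"
  proof (rule integral_abs_bound_integral[OF int_cos])
    fix \<eta> :: 'a
    have "\<bar>cos (\<eta> \<bullet> y) - 1\<bar> \<le> norm \<eta> * norm y"
      using abs_cos_sub_one_le[of "\<eta> \<bullet> y"] Cauchy_Schwarz_ineq2[of \<eta> y] by linarith
    then show "\<bar>ring_gauss s \<eta> * (cos (\<eta> \<bullet> y) - 1)\<bar> \<le> norm y * (ring_gauss s \<eta> * norm \<eta>)"
      by (simp add: abs_mult mult_left_mono ring_gauss_pos less_imp_le mult_ac)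
  qed (use integrable_ring_gauss_norm[OF d s(1)] in simp)
  also have "\<dots> = norm y * (LINT \<eta>|lborel. ring_gauss s \<eta> * norm (\<eta>::'a))" by simp
  also have "\<dots> \<le> norm y * (LINT \<eta>|lborel. 2 * exp (S^2/8) * 320^5 * quartic_weight (\<eta>::'a))"
    using integrable_ring_gauss_norm[OF d s(1)] integrable_quartic_weight[OF d]
    by (intro mult_left_mono integral_mono ring_gauss_norm_le[OF s]) auto
  finally show ?thesis by simp
qed

lemma ring_kernel_sq_le_quartic_weight:
  assumes d: "DIM('a::euclidean_space) \<le> 3"
  obtains K where "\<And>s y. 0 \<le> s \<Longrightarrow> s \<le> S \<Longrightarrow> (ring_kernel s y)^2 \<le> K * quartic_weight (y::'a)"
proof
  define I where "I = (LINT x|lborel. quartic_weight (x::'a))"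
  define M where "M = 2 * exp (S^2/8) * 320^5 * I"
  define D where "D = pi^2 * second_derivative_const S * I / 2"
  fix s and y :: 'a assume s: "0 \<le> s" "s \<le> S"
  show "(ring_kernel s y)^2 \<le> (M^2 * (1 + (2*pi)^4) + 2 * D^2) * quartic_weight y"
  proof (cases "norm y < 2 * pi")
    case True
    have "\<bar>ring_kernel s y\<bar> \<le> M"
      using abs_ring_kernel_le_ring_kernel_0[OF d s(1), of y] ring_kernel_0_le[OF d s]
      unfolding M_def I_def by linarith
    then have "(ring_kernel s y)^2 \<le> M^2" by (metis abs_ge_zero power2_abs power_mono)
    also have "\<dots> \<le> (M^2 * (1 + (2*pi)^4)) * quartic_weight y"
      using power_mono[of "norm y" "2*pi" 4] True by (intro le_quartic_weightI mult_left_mono) auto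
    also have "\<dots> \<le> (M^2 * (1 + (2*pi)^4) + 2 * D^2) * quartic_weight y"
      using quartic_weight_pos[of y] by (intro mult_right_mono) auto
    finally show ?thesis .
  next
    case False
    then have y: "norm y \<ge> 2 * pi" by simp
    then have y1: "1 \<le> norm y ^ 4" using pi_gt3 by (intro one_le_power) linarith
    have "\<bar>ring_kernel s y\<bar> \<le> D / norm y ^ 2"
      using ring_kernel_decay[OF d s y] unfolding D_def I_def by (simp add: field_simps)
    then have "(ring_kernel s y)^2 \<le> (D / norm y ^ 2)^2" by (metis abs_ge_zero power2_abs power_mono)
    also have "\<dots> = D^2 / norm y ^ 4" by (simp add: power_divide flip: power_mult)
    also have "\<dots> \<le> (2 * D^2) * quartic_weight y"
    proof (rule le_quartic_weightI)
      have "D^2 / norm y ^ 4 \<le> D^2" using y1 by (simp add: divide_le_eq mult_le_cancel_left1 mult_le_cancel_left2)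
      then show "D^2 / norm y ^ 4 * (1 + norm y ^ 4) \<le> 2 * D^2"
        using y1 by (simp add: distrib_left)
    qed
    also have "\<dots> \<le> (M^2 * (1 + (2*pi)^4) + 2 * D^2) * quartic_weight y"
      using quartic_weight_pos[of y] by (intro mult_right_mono) auto
    finally show ?thesis .
  qed
qed

lemma ring_kernel_ge_near_0:
  assumes d: "DIM('a::euclidean_space) \<le> 3"
  obtains a r where "a > 0" "r > 0"
    "\<And>s y. 0 \<le> s \<Longrightarrow> s \<le> S \<Longrightarrow> norm y < r \<Longrightarrow> a \<le> ring_kernel s (y::'a)"
proof
  define M where "M = 2 * exp (S^2/8) * 320^5 * (LINT x|lborel. quartic_weight (x::'a))"
  define a0 where "a0 = exp (- ((1 + S)^2 / 8)) * unit_ball_vol DIM('a)"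
  have M: "M \<ge> 0" unfolding M_def using integral_quartic_weight_nonneg by (simp add: zero_le_mult_iff)
  have a0: "a0 > 0" unfolding a0_def by simp
  show "a0 / 2 > 0" "a0 / (2 * M + 1) > 0" using a0 M by auto
  fix s and y :: 'a assume s: "0 \<le> s" "s \<le> S" and y: "norm y < a0 / (2 * M + 1)"
  have "norm y * M \<le> a0 / 2"
  proof -
    have "norm y * M \<le> a0 / (2 * M + 1) * M" using y M by (intro mult_right_mono) auto
    also have "\<dots> \<le> a0 / 2" using a0 M by (simp add: field_simps)
    finally show ?thesis .
  qed
  moreover have "\<bar>ring_kernel s y - ring_kernel s (0::'a)\<bar> \<le> norm y * M"
    unfolding M_def by (rule ring_kernel_lipschitz_at_0[OF d s])
  moreover have "a0 \<le> ring_kernel s (0::'a)" unfolding a0_def by (rule ring_kernel_0_ge[OF d s])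
  ultimately show "a0 / 2 \<le> ring_kernel s y" by linarith
qed

lemma ring_kernel_L2_bounds:
  assumes d: "DIM('a::euclidean_space) \<le> 3"
  shows "\<exists>ql qu. 0 < ql \<and> 0 < qu \<and> (\<forall>s. 0 \<le> s \<and> s \<le> S \<longrightarrow>
    ql \<le> (LINT y|lborel. (ring_kernel s (y::'a))^2) \<and> (LINT y|lborel. (ring_kernel s (y::'a))^2) \<le> qu)"
proof -
  obtain K where K: "\<And>s y. 0 \<le> s \<Longrightarrow> s \<le> S \<Longrightarrow> (ring_kernel s y)^2 \<le> K * quartic_weight (y::'a)"
    using ring_kernel_sq_le_quartic_weight[OF d] by blast
  obtain a r where ar: "a > 0" "r > 0"
    and near_0: "\<And>s y. 0 \<le> s \<Longrightarrow> s \<le> S \<Longrightarrow> norm y < r \<Longrightarrow> a \<le> ring_kernel s (y::'a)"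
    using ring_kernel_ge_near_0[OF d] by blast
  have int: "integrable lborel (\<lambda>y::'a. (ring_kernel s y)^2)" if s: "0 \<le> s" "s \<le> S" for s
    using K[OF s] by (intro integrable_quartic_weight_bound[OF d, where C=K]) auto
  show ?thesis
  proof (intro exI conjI allI impI)
    show "a^2 * unit_ball_vol DIM('a) * r ^ DIM('a) > 0" "\<bar>K\<bar> * (LINT y|lborel. quartic_weight (y::'a)) + 1 > 0"
      using ar integral_quartic_weight_nonneg by (auto intro!: add_nonneg_pos simp: zero_le_mult_iff)
    fix s assume "0 \<le> s \<and> s \<le> S"
    then have s: "0 \<le> s" "s \<le> S" by auto
    have "(LINT y|lborel. (ring_kernel s (y::'a))^2) \<le> (LINT y|lborel. K * quartic_weight (y::'a))"
      using int[OF s] integrable_quartic_weight[OF d] K[OF s] by (intro integral_mono) auto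
    also have "\<dots> = K * (LINT y|lborel. quartic_weight (y::'a))" by simp
    also have "\<dots> \<le> \<bar>K\<bar> * (LINT y|lborel. quartic_weight (y::'a))"
      using integral_quartic_weight_nonneg by (intro mult_right_mono) auto
    finally show "(LINT y|lborel. (ring_kernel s (y::'a))^2) \<le> \<bar>K\<bar> * (LINT y|lborel. quartic_weight (y::'a)) + 1"
      by simp
    have "(LINT y|lborel. a^2 * indicator (ball (0::'a) r) y) \<le> (LINT y|lborel. (ring_kernel s (y::'a))^2)"
    proof (rule integral_mono[OF _ int[OF s]])
      fix y :: 'a
      show "a^2 * indicator (ball 0 r) y \<le> (ring_kernel s y)^2"
      proof (cases "norm y < r")
        case True
        then show ?thesis using near_0[OF s True] ar by (simp add: power_mono)
      qed simp
    qed (use emeasure_lborel_ball_finite[of "0::'a" r] in simp)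
    then show "a^2 * unit_ball_vol DIM('a) * r ^ DIM('a) \<le> (LINT y|lborel. (ring_kernel s (y::'a))^2)"
      using ar by (simp add: content_ball)
  qed
qed

lemma integral_radial_cos_scale:
  fixes g :: "real \<Rightarrow> real" and y :: "'a::euclidean_space"
  assumes "l > 0"
  shows "(LINT \<xi>|lborel. g (norm \<xi>) * cos (\<xi> \<bullet> y))
    = l ^ DIM('a) * (LINT \<eta>|lborel. g (l * norm \<eta>) * cos (\<eta> \<bullet> (l *\<^sub>R y)))"
  using integral_lborel_scale[OF assms, of "\<lambda>\<xi>. g (norm \<xi>) * cos (\<xi> \<bullet> y)"] assms by simp

lemma integral_square_rescaled:
  fixes f :: "'a::euclidean_space \<Rightarrow> real"
  assumes "t > 0"
  shows "(LINT x|lborel. (c * t powr (- DIM('a) / 4) * f (t powr (-1/4) *\<^sub>R x))^2)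
    = c^2 * t powr (- DIM('a) / 4) * (LINT y|lborel. (f y)^2)"
proof -
  define l where "l = t powr (-1/4)"
  have l: "l > 0" "l ^ DIM('a) = t powr (- DIM('a) / 4)"
    unfolding l_def using assms by (simp_all flip: powr_realpow add: powr_powr)
  have "(LINT y|lborel. (f y)^2) = t powr (- DIM('a) / 4) * (LINT x|lborel. (f (l *\<^sub>R x))^2)"
    using integral_lborel_scale[OF l(1), of "\<lambda>y. (f y)^2"] l(2) by simp
  moreover have "(t powr (- DIM('a) / 4))^2 = t powr (- DIM('a) / 4) * t powr (- DIM('a) / 4)"
    by (simp add: power2_eq_square)
  ultimately show ?thesis
    unfolding l_def[symmetric] by (simp add: power_mult_distrib mult_ac)
qed

lemma
  fixes t :: real assumes "t > 0"
  shows powr_quarter_sq: "(t powr (-1/4))^2 * sqrt t = 1"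
    and powr_quarter_4: "t * (t powr (-1/4))^4 = 1"
  using assms by (simp_all flip: powr_realpow powr_add add: powr_powr powr_half_sqrt[symmetric])

lemma K_LKS_eq_ring_kernel:
  fixes x :: "real ^ 'n" assumes t: "t > 0"
  shows "K_LKS t x = (2 * pi) powr (- real CARD('n)) * t powr (- real CARD('n) / 4)
    * ring_kernel (2 * sqrt t) (t powr (-1/4) *\<^sub>R x)"
proof -
  define l where "l = t powr (-1/4)"
  have l: "l > 0" "l ^ CARD('n) = t powr (- real CARD('n) / 4)"
    unfolding l_def using t by (simp_all flip: powr_realpow add: powr_powr)
  have "t / 8 * (- 2 + (l * r)^2)^2 = (r^2 - 2 * sqrt t)^2 / 8" for r
  proof -
    have "t * (- 2 + (l * r)^2)^2 = (sqrt t * (- 2 + l^2 * r^2))^2"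
      using t by (simp add: power_mult_distrib)
    also have "sqrt t * (- 2 + l^2 * r^2) = r^2 - 2 * sqrt t"
      using powr_quarter_sq[OF t] unfolding l_def[symmetric] by (simp add: algebra_simps)
    finally show ?thesis by simp
  qed
  then show ?thesis
    unfolding K_LKS_def ring_kernel_def ring_gauss_def l_def[symmetric]
    by (subst integral_radial_cos_scale[OF l(1)]) (simp add: l(2))
qed

lemma K_SFO_eq_ring_kernel:
  fixes x :: "real ^ 'n" assumes t: "t > 0"
  shows "K_SFO t x = (2 * pi) powr (- real CARD('n)) * t powr (- real CARD('n) / 4)
    * ring_kernel 0 (t powr (-1/4) *\<^sub>R x)"
proof -
  define l where "l = t powr (-1/4)"
  have l: "l > 0" "l ^ CARD('n) = t powr (- real CARD('n) / 4)"
    unfolding l_def using t by (simp_all flip: powr_realpow add: powr_powr)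
  have "t / 8 * (l * r)^4 = (r^2 - 0)^2 / 8" for r
    using powr_quarter_4[OF t] unfolding l_def[symmetric]
    by (simp add: power_mult_distrib flip: power_mult)
  then show ?thesis
    unfolding K_SFO_def ring_kernel_def ring_gauss_def l_def[symmetric]
    by (subst integral_radial_cos_scale[OF l(1)]) (simp add: l(2))
qed

lemma integral_K_SFO_sq:
  assumes "t > 0"
  shows "(LINT x|lborel. (K_SFO t (x::real ^ 'n))^2)
    = ((2 * pi) powr (- real CARD('n)))^2 * t powr (- real CARD('n) / 4)
      * (LINT y|lborel. (ring_kernel 0 (y::real ^ 'n))^2)"
  using integral_square_rescaled[OF assms, where 'a="real ^ 'n"] by (simp add: K_SFO_eq_ring_kernel[OF assms])

lemma integral_K_LKS_sq:
  assumes "t > 0"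
  shows "(LINT x|lborel. (K_LKS t (x::real ^ 'n))^2)
    = ((2 * pi) powr (- real CARD('n)))^2 * t powr (- real CARD('n) / 4)
      * (LINT y|lborel. (ring_kernel (2 * sqrt t) (y::real ^ 'n))^2)"
  using integral_square_rescaled[OF assms, where 'a="real ^ 'n"] by (simp add: K_LKS_eq_ring_kernel[OF assms])

lemma interval_integral_powr:
  fixes e t :: real assumes e: "e > -1" and t: "t > 0"
  shows "set_integrable lborel {0<..<t} (\<lambda>s. s powr e)"
    and "(LBINT s=0..t. s powr e) = t powr (e+1) / (e+1)"
proof -
  have h: "((\<lambda>s. s powr e) has_integral (t powr (e+1) / (e+1))) {0<..<t}"
    using has_integral_powr_from_0[OF e, of t] t by (simp add: has_integral_Icc_iff_Ioo)
  have "(\<lambda>s. s powr e) absolutely_integrable_on {0<..<t}"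
    by (rule nonnegative_absolutely_integrable_1) (use h in \<open>auto simp: integrable_on_def\<close>)
  then show si: "set_integrable lborel {0<..<t} (\<lambda>s. s powr e)"
    unfolding set_integrable_def by (subst (asm) integrable_completion) measurable
  have "(LINT s:{0<..<t}|lborel. s powr e) = integral {0<..<t} (\<lambda>s. s powr e)"
    by (rule set_borel_integral_eq_integral(2)[OF si])
  also have "\<dots> = t powr (e+1) / (e+1)" using h by (rule integral_unique)
  finally show "(LBINT s=0..t. s powr e) = t powr (e+1) / (e+1)"
    using t by (simp add: interval_integral_Ioo)
qed

lemma interval_integral_powr_bounds:
  fixes h :: "real \<Rightarrow> real"
  assumes e: "e > -1" and t: "t > 0" and [measurable]: "h \<in> borel_measurable borel" and "Cl \<ge> 0"
    and bounds: "\<And>s. 0 < s \<Longrightarrow> s < t \<Longrightarrow> Cl * s powr e \<le> h s \<and> h s \<le> Cu * s powr e"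
  shows "Cl / (e+1) * t powr (e+1) \<le> (LBINT s=0..t. h s)"
    and "(LBINT s=0..t. h s) \<le> Cu / (e+1) * t powr (e+1)"
proof -
  note powr_int = set_integrable_mult_right[OF interval_integral_powr(1)[OF e t]]
  have h_int: "set_integrable lborel {0<..<t} h"
  proof (rule set_integrable_bound[OF powr_int[of Cu]])
    show "AE s in lborel. s \<in> {0<..<t} \<longrightarrow> norm (h s) \<le> norm (Cu * s powr e)"
      using bounds \<open>Cl \<ge> 0\<close> by (intro AE_I2) (smt (verit) greaterThanLessThan_iff powr_ge_zero
          real_norm_def zero_le_mult_iff)
  qed (simp add: set_borel_measurable_def)
  have eq: "(LBINT s=0..t. f s) = (LINT s:{0<..<t}|lborel. f s)" for f :: "real \<Rightarrow> real"
    using t by (simp add: interval_integral_Ioo)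
  have "(LINT s:{0<..<t}|lborel. Cl * s powr e) \<le> (LINT s:{0<..<t}|lborel. h s)"
    by (rule set_integral_mono[OF powr_int h_int]) (use bounds in auto)
  then show "Cl / (e+1) * t powr (e+1) \<le> (LBINT s=0..t. h s)"
    using interval_integral_powr(2)[OF e t] by (simp add: eq)
  have "(LINT s:{0<..<t}|lborel. h s) \<le> (LINT s:{0<..<t}|lborel. Cu * s powr e)"
    by (rule set_integral_mono[OF h_int powr_int]) (use bounds in auto)
  then show "(LBINT s=0..t. h s) \<le> Cu / (e+1) * t powr (e+1)"
    using interval_integral_powr(2)[OF e t] by (simp add: eq)
qed

lemma power_law_bounds_and_time_integrals:
  fixes F G Q :: "real \<Rightarrow> real"
  assumes c: "c > 0" and e: "e > -1"
    and [measurable]: "F \<in> borel_measurable borel" "G \<in> borel_measurable borel"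
    and F: "\<And>t. t > 0 \<Longrightarrow> F t = c * t powr e * Q 0"
    and G: "\<And>t. t > 0 \<Longrightarrow> G t = c * t powr e * Q (2 * sqrt t)"
    and Q: "\<And>S. \<exists>ql qu. 0 < ql \<and> 0 < qu \<and> (\<forall>s. 0 \<le> s \<and> s \<le> S \<longrightarrow> ql \<le> Q s \<and> Q s \<le> qu)"
  shows "\<exists>C C'. C > 0 \<and> C' > 0 \<and> (\<forall>T. T > 0 \<longrightarrow> (\<exists>Cl Cu Cl' Cu'. Cl > 0 \<and> Cu > 0 \<and> Cl' > 0 \<and> Cu' > 0 \<and>
    (\<forall>t. 0 < t \<and> t \<le> T \<longrightarrow> F t = C * t powr e \<and> Cl * t powr e \<le> G t \<and> G t \<le> Cu * t powr e \<and>
      (LBINT s=0..t. F s) = C' * t powr (e+1) \<and>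
      Cl' * t powr (e+1) \<le> (LBINT s=0..t. G s) \<and> (LBINT s=0..t. G s) \<le> Cu' * t powr (e+1))))"
proof -
  obtain ql qu where q: "\<And>S. 0 < ql S" "\<And>S. 0 < qu S"
    "\<And>S s. 0 \<le> s \<Longrightarrow> s \<le> S \<Longrightarrow> ql S \<le> Q s \<and> Q s \<le> qu S"
    using Q by metis
  have G_bounds: "c * ql (2 * sqrt T) * s powr e \<le> G s \<and> G s \<le> c * qu (2 * sqrt T) * s powr e"
    if "0 < s" "s \<le> T" for s T
    using q(3)[of "2 * sqrt s" "2 * sqrt T"] that c by (simp add: G mult_ac)
  show ?thesis
  proof (intro exI conjI allI impI)
    have "Q 0 > 0" using q(1)[of 0] q(3)[of 0 0] by force
    then show C: "c * Q 0 > 0" and "c * Q 0 / (e+1) > 0" using c e by auto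
    fix T :: real assume "T > 0"
    let ?ql = "ql (2 * sqrt T)" and ?qu = "qu (2 * sqrt T)"
    show "c * ?ql > 0" "c * ?qu > 0" "c * ?ql / (e+1) > 0" "c * ?qu / (e+1) > 0" using c e q by auto
    fix t assume t: "0 < t \<and> t \<le> T"
    show "F t = c * Q 0 * t powr e" using t by (simp add: F)
    show "c * ?ql * t powr e \<le> G t" "G t \<le> c * ?qu * t powr e" using G_bounds t by auto
    have "0 \<le> c * ?ql" using c q(1) by (simp add: less_imp_le)
    with G_bounds[of _ T] t show "c * ?ql / (e+1) * t powr (e+1) \<le> (LBINT s=0..t. G s)"
      "(LBINT s=0..t. G s) \<le> c * ?qu / (e+1) * t powr (e+1)"
      using interval_integral_powr_bounds[OF e, of t G "c * ?ql" "c * ?qu"] by auto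
    show "(LBINT s=0..t. F s) = c * Q 0 / (e+1) * t powr (e+1)"
      using interval_integral_powr_bounds[OF e, of t F "c * Q 0" "c * Q 0"] t C by (auto simp: F)
  qed
qed

theorem lemma3p1:
  assumes "CARD('n::finite) \<le> 3"
  shows "\<exists>C C' :: real. C > 0 \<and> C' > 0 \<and>
    (\<forall>T::real. T > 0 \<longrightarrow>
      (\<exists>Cl Cu Cl' Cu' :: real. Cl > 0 \<and> Cu > 0 \<and> Cl' > 0 \<and> Cu' > 0 \<and>
        (\<forall>t. 0 < t \<and> t \<le> T \<longrightarrow>
          (LINT x|lborel. (K_SFO t (x :: real ^ 'n))^2) = C * t powr (- real CARD('n) / 4) \<and>
          Cl * t powr (- real CARD('n) / 4) \<le> (LINT x|lborel. (K_LKS t (x :: real ^ 'n))^2) \<and>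
          (LINT x|lborel. (K_LKS t (x :: real ^ 'n))^2) \<le> Cu * t powr (- real CARD('n) / 4) \<and>
          (LBINT s=0..t. (LINT x|lborel. (K_SFO s (x :: real ^ 'n))^2))
             = C' * t powr ((4 - real CARD('n)) / 4) \<and>
          Cl' * t powr ((4 - real CARD('n)) / 4)
             \<le> (LBINT s=0..t. (LINT x|lborel. (K_LKS s (x :: real ^ 'n))^2)) \<and>
          (LBINT s=0..t. (LINT x|lborel. (K_LKS s (x :: real ^ 'n))^2))
             \<le> Cu' * t powr ((4 - real CARD('n)) / 4))))"
proof -
  have d: "DIM(real ^ 'n) \<le> 3" using assms by simp
  have meas: "(\<lambda>t. LINT x|lborel. (K_SFO t (x::real ^ 'n))^2) \<in> borel_measurable borel"
    "(\<lambda>t. LINT x|lborel. (K_LKS t (x::real ^ 'n))^2) \<in> borel_measurable borel"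
    unfolding K_SFO_def K_LKS_def by measurable
  have c: "((2 * pi) powr (- real CARD('n)))^2 > 0" by simp
  have e: "- real CARD('n) / 4 > -1" using assms by simp
  have exponent: "(4 - real CARD('n)) / 4 = - real CARD('n) / 4 + 1" by simp
  show ?thesis unfolding exponent
    by (rule power_law_bounds_and_time_integrals[OF c e meas integral_K_SFO_sq integral_K_LKS_sq
        ring_kernel_L2_bounds[OF d]])
qed

end
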